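(* Let $0<p<1$ and let $\{a_n\}_{n\geq 0}$ be a sequence of non-negative real numbers such that $\{a^p_n\}_{n\geq 0}$ converges to a finite limit $a\in\mathbb{R}$. Then $\left\{\frac{1}{n+1}a^y_n(p)\right\}_{n\geq 0}$ converges to $0$, where $$a^y_n(p)=\sum_{i=\lfloor pn-\epsilon(n)\rfloor+1}^{\lfloor pn+\epsilon(n)\rfloor-1}w_n^i(p)\, a_i.$$
   Context: $a^p_n=\sum_{i=0}^n\binom{n}{i}p^i(1-p)^{n-i}a_i$. For $0<p<1$, $n\in\mathbb{N}$ and integer $i\ge0$, $w_n^i(p)=\sum_{j=i}^n\binom{j}{i}p^i(1-p)^{j-i}$ (an empty sum, i.e. $0$, if $i>n$). $\epsilon(n)=\sqrt{n}\log n$ for $n\geq2$ and $\epsilon(n)=1$ otherwise. *)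

theory Defs
  imports Complex_Main
begin

definition binom_trans :: "real \<Rightarrow> (nat \<Rightarrow> real) \<Rightarrow> nat \<Rightarrow> real" where
  "binom_trans p a n = (\<Sum>i=0..n. real (n choose i) * p ^ i * (1 - p) ^ (n - i) * a i)"

definition w :: "real \<Rightarrow> nat \<Rightarrow> nat \<Rightarrow> real" where
  "w p n i = (\<Sum>j=i..n. real (j choose i) * p ^ i * (1 - p) ^ (j - i))"

definition eps :: "nat \<Rightarrow> real" where
  "eps n = (if n \<ge> 2 then sqrt (real n) * ln (real n) else 1)"

text \<open>a^y_n(p): sum of w_n^i(p) a_i over the integers i (with i >= 0, since a_i is
  only defined there) in the range floor(pn - eps n)+1 .. floor(pn + eps n)-1.\<close>
definition ay :: "real \<Rightarrow> (nat \<Rightarrow> real) \<Rightarrow> nat \<Rightarrow> real" where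
  "ay p a n = (\<Sum>i\<in>{i::nat. \<lfloor>p * real n - eps n\<rfloor> + 1 \<le> int i
                              \<and> int i \<le> \<lfloor>p * real n + eps n\<rfloor> - 1}. w p n i * a i)"

end

theory Submission
  imports Defs "HOL-Probability.Probability" "HOL-Real_Asymp.Real_Asymp"
begin

text \<open>For fixed \<open>i\<close>, the weights \<open>C(j,i) p^i (1-p)^(j-i)\<close>, \<open>j \<ge> i\<close>, are \<open>1/p\<close> times the
  distribution of \<open>i\<close> plus a negative binomial variable with parameters \<open>i+1\<close> and \<open>p\<close>. Hence
  \<open>w_n^i(p) \<le> 1/p\<close>, and by concentration at least half of that mass sits on indices \<open>j\<close> within
  \<open>O(\<epsilon>(n))\<close> of \<open>(i+1)/p\<close>. For \<open>i\<close> in the window \<open>|i - pn| < \<epsilon>(n)\<close> those \<open>j\<close> lie within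
  \<open>O(\<epsilon>(n))\<close> of \<open>n\<close>, so exchanging the order of summation bounds \<open>a^y_n(p)\<close> by twice the sum
  of \<open>O(\<epsilon>(n))\<close> consecutive values of the bounded sequence \<open>a^p_j\<close>. Since \<open>\<epsilon>(n) = o(n)\<close>,
  the claim follows.\<close>

lemma neg_binomial_pmf_concentration:
  fixes p t :: real and m :: nat
  assumes p: "0 < p" "p < 1" and t: "t > 0" and tail: "real m + p * t \<le> p ^ 3 * t\<^sup>2"
  shows "measure_pmf.prob (neg_binomial_pmf m p) {x. \<bar>real x - real m * (1 - p) / p\<bar> < t} \<ge> 1/2"
proof -
  define M where "M = neg_binomial_pmf m p"
  define \<mu> where "\<mu> = real m * (1 - p) / p"
  define Lo where "Lo = {x::nat. real x \<le> \<mu> - t}"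
  define Up where "Up = {x::nat. \<mu> + t \<le> real x}"
  have pin: "p \<in> {0<..<1}" using p by auto
  have denom_pos: "0 < real m + p * t" using p t by (simp add: add_nonneg_pos)
  have "exp (1::real) * exp 1 \<ge> 2 * 2"
    using exp_ge_add_one_self[of 1] by (intro mult_mono) auto
  then have "exp (-2::real) \<le> 1/4"
    by (simp add: exp_minus field_simps flip: exp_add)
  moreover have "1 \<le> p ^ 3 * t\<^sup>2 / (real m + p * t)" using tail denom_pos by simp
  then have "- 2 * p ^ 3 * t\<^sup>2 / (real m + p * t) \<le> -2" by simp
  ultimately have exp_le: "exp (- 2 * p ^ 3 * t\<^sup>2 / (real m + p * t)) \<le> 1/4"
    by (meson exp_le_cancel_iff order_trans)
  have Up_le: "measure_pmf.prob M Up \<le> 1/4"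
    using prob_neg_binomial_pmf_ge_bound[OF pin, of t m] t exp_le
    unfolding M_def Up_def \<mu>_def by simp
  have Lo_le: "measure_pmf.prob M Lo \<le> 1/4"
  proof (cases "real m \<le> p * t")
    case True
    have "real m * (1 - p) < p * t"
    proof (cases "m = 0")
      case False
      then have "real m * (1 - p) < real m" using p by simp
      with True show ?thesis by linarith
    qed (use p t in simp)
    then have "\<mu> - t < 0" using p by (simp add: \<mu>_def field_simps)
    then have "Lo = {}" by (auto simp: Lo_def)
    then show ?thesis by simp
  next
    case False
    then have "2 * p ^ 3 * t\<^sup>2 / (real m + p * t) \<le> 2 * p ^ 3 * t\<^sup>2 / (real m - p * t)"
      using p t denom_pos by (intro divide_left_mono mult_pos_pos) auto
    then have "- 2 * p ^ 3 * t\<^sup>2 / (real m - p * t) \<le> - 2 * p ^ 3 * t\<^sup>2 / (real m + p * t)"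
      by simp
    then have "exp (- 2 * p ^ 3 * t\<^sup>2 / (real m - p * t)) \<le> 1/4"
      using exp_le by (meson exp_le_cancel_iff order_trans)
    then show ?thesis
      using prob_neg_binomial_pmf_le_bound[OF pin, of t m] t
      unfolding M_def Lo_def \<mu>_def by simp
  qed
  have "- {x. \<bar>real x - \<mu>\<bar> < t} \<subseteq> Lo \<union> Up" unfolding Lo_def Up_def by auto
  then have "measure_pmf.prob M (- {x. \<bar>real x - \<mu>\<bar> < t}) \<le> measure_pmf.prob M (Lo \<union> Up)"
    by (intro measure_pmf.finite_measure_mono) auto
  also have "\<dots> \<le> measure_pmf.prob M Lo + measure_pmf.prob M Up"
    by (intro measure_subadditive) auto
  finally show ?thesis
    using Lo_le Up_le measure_pmf.prob_compl[of "{x. \<bar>real x - \<mu>\<bar> < t}" M]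
    unfolding M_def \<mu>_def by (simp add: Compl_eq_Diff_UNIV)
qed

definition binom_weight :: "real \<Rightarrow> nat \<Rightarrow> nat \<Rightarrow> real" where
  "binom_weight p j i = real (j choose i) * p ^ i * (1 - p) ^ (j - i)"

lemma binom_weight_nonneg: "0 \<le> p \<Longrightarrow> p \<le> 1 \<Longrightarrow> 0 \<le> binom_weight p j i"
  by (simp add: binom_weight_def)

lemma binom_trans_eq_sum_binom_weight: "binom_trans p a j = (\<Sum>i=0..j. binom_weight p j i * a i)"
  by (simp add: binom_trans_def binom_weight_def)

lemma w_eq_sum_binom_weight: "w p n i = (\<Sum>j=i..n. binom_weight p j i)"
  by (simp add: w_def binom_weight_def)

lemma pmf_neg_binomial_Suc:
  assumes "0 < p" "p < 1"
  shows "pmf (neg_binomial_pmf (Suc i) p) x = p * binom_weight p (i + x) i"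
proof -
  have "pmf (neg_binomial_pmf (Suc i) p) x = real ((x + i) choose x) * p ^ Suc i * (1 - p) ^ x"
    using assms by (subst pmf_neg_binomial) auto
  also have "(x + i) choose x = (i + x) choose i"
    using binomial_symmetric[of x "x + i"] by (simp add: add.commute)
  finally show ?thesis by (simp add: binom_weight_def)
qed

lemma w_le_inverse:
  assumes "0 < p" "p < 1"
  shows "w p n i \<le> 1 / p"
proof -
  have "p * w p n i = (\<Sum>x=0..n-i. p * binom_weight p (i + x) i)" if "i \<le> n"
    using that sum.shift_bounds_cl_nat_ivl[of "\<lambda>j. binom_weight p j i" 0 i "n - i"]
    by (simp add: w_eq_sum_binom_weight sum_distrib_left add.commute)
  also have "\<dots> = measure_pmf.prob (neg_binomial_pmf (Suc i) p) {0..n-i}"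
    by (simp add: measure_measure_pmf_finite pmf_neg_binomial_Suc[OF assms])
  finally have "p * w p n i \<le> 1"
    by (cases "i \<le> n") (auto simp: w_def)
  with assms show ?thesis by (simp add: field_simps mult.commute)
qed

lemma binom_weight_concentration:
  assumes p: "0 < p" "p < 1" and e: "e > 0" and i: "real (Suc i) + e \<le> p * e\<^sup>2"
  shows "1 / (2 * p) \<le> (\<Sum>j\<in>{j. i \<le> j \<and> \<bar>real j + 1 - real (Suc i) / p\<bar> < e / p}. binom_weight p j i)"
proof -
  define A where "A = {x::nat. \<bar>real x - real (Suc i) * (1 - p) / p\<bar> < e / p}"
  have "A \<subseteq> {..nat \<lceil>real (Suc i) * (1 - p) / p + e / p\<rceil>}"
    unfolding A_def by (auto simp: abs_less_iff) linarith
  then have "finite A" by (rule finite_subset) simp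
  have tail: "real (Suc i) + p * (e / p) \<le> p ^ 3 * (e / p)\<^sup>2"
    using i p by (simp add: power2_eq_square power3_eq_cube)
  then have "1/2 \<le> measure_pmf.prob (neg_binomial_pmf (Suc i) p) A"
    unfolding A_def using neg_binomial_pmf_concentration[OF p _ tail] p e by simp
  also have "\<dots> = p * (\<Sum>x\<in>A. binom_weight p (i + x) i)"
    using \<open>finite A\<close> by (simp add: measure_measure_pmf_finite pmf_neg_binomial_Suc[OF p] sum_distrib_left)
  also have "(\<Sum>x\<in>A. binom_weight p (i + x) i) = (\<Sum>j\<in>(+) i ` A. binom_weight p j i)"
    by (simp add: sum.reindex)
  also have "(+) i ` A = {j. i \<le> j \<and> \<bar>real j + 1 - real (Suc i) / p\<bar> < e / p}"
  proof -
    have "real (i + x) + 1 - real (Suc i) / p = real x - real (Suc i) * (1 - p) / p" for x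
      using p by (simp add: field_simps)
    then show ?thesis unfolding A_def by (auto simp: image_iff le_iff_add)
  qed
  finally show ?thesis using p by (simp add: field_simps)
qed

lemma ay_index_near:
  assumes "\<lfloor>p * real n - e\<rfloor> + 1 \<le> int i" "int i \<le> \<lfloor>p * real n + e\<rfloor> - 1"
  shows "\<bar>real i - p * real n\<bar> < e"
proof -
  have "\<lfloor>p * real n - e\<rfloor> < int i" using assms(1) by linarith
  then have "p * real n - e < real i" by (simp add: floor_less_iff)
  moreover have "real i < p * real n + e"
    using assms(2) le_floor_iff[of "int i + 1" "p * real n + e"] by simp
  ultimately show ?thesis by (simp add: abs_less_iff)
qed

text \<open>The hypothesis \<open>n + 2 \<epsilon>(n) + 1 \<le> p \<epsilon>(n)\<^sup>2\<close> makes \<open>binom_weight_concentration\<close>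
  applicable with \<open>e = \<epsilon>(n)\<close> to every index \<open>i < pn + \<epsilon>(n)\<close>.\<close>

lemma ay_le_sum_binom_trans:
  fixes p :: real and a :: "nat \<Rightarrow> real"
  assumes p: "0 < p" "p < 1" and a: "\<And>n. a n \<ge> 0"
    and e: "eps n > 0" and large: "real n + 2 * eps n + 1 \<le> p * (eps n)\<^sup>2"
  defines "R \<equiv> nat \<lceil>(2 * eps n + 1) / p\<rceil>"
  shows "ay p a n \<le> 2 * (\<Sum>j\<in>{n - R..n + R}. binom_trans p a j)"
proof -
  define W where "W = {i::nat. \<lfloor>p * real n - eps n\<rfloor> + 1 \<le> int i \<and> int i \<le> \<lfloor>p * real n + eps n\<rfloor> - 1}"
  define S where "S i = {j. i \<le> j \<and> \<bar>real j + 1 - real (Suc i) / p\<bar> < eps n / p}" for i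
  define f where "f j i = binom_weight p j i * a i" for j i
  have f_nonneg: "f j i \<ge> 0" for j i unfolding f_def using p a binom_weight_nonneg by simp
  have near: "\<bar>real i - p * real n\<bar> < eps n" if "i \<in> W" for i
    using that ay_index_near unfolding W_def by blast
  have "finite W" by (rule finite_subset[of _ "{..nat \<lfloor>p * real n + eps n\<rfloor>}"]) (auto simp: W_def)
  have term_le: "w p n i * a i \<le> 2 * (\<Sum>j\<in>S i. f j i)" if "i \<in> W" for i
  proof -
    have "p * real n \<le> real n" using p by (simp add: mult_left_le_one_le)
    then have "real (Suc i) + eps n \<le> p * (eps n)\<^sup>2" using near[OF that] large by simp
    then have "1 / (2 * p) \<le> (\<Sum>j\<in>S i. binom_weight p j i)"
      unfolding S_def by (rule binom_weight_concentration[OF p e])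
    then have "2 * (1 / (2 * p)) * a i \<le> 2 * (\<Sum>j\<in>S i. binom_weight p j i) * a i"
      using a[of i] by (intro mult_right_mono) auto
    then have "a i / p \<le> 2 * (\<Sum>j\<in>S i. binom_weight p j i) * a i" by simp
    moreover have "w p n i * a i \<le> a i / p"
      using w_le_inverse[OF p] a[of i] by (simp add: mult_right_mono[of _ "1 / p", simplified])
    ultimately show ?thesis by (simp add: f_def flip: sum_distrib_right)
  qed
  have S_sub: "S i \<subseteq> {j\<in>{n - R..n + R}. i \<le> j}" if "i \<in> W" for i
  proof
    fix j assume "j \<in> S i"
    then have "i \<le> j" and j: "\<bar>real j + 1 - real (Suc i) / p\<bar> < eps n / p" by (auto simp: S_def)
    have "\<bar>real i + 1 - p - p * real n\<bar> < eps n + 1" using near[OF that] p by auto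
    then have "\<bar>real (Suc i) / p - 1 - real n\<bar> < (eps n + 1) / p"
      using p by (simp add: field_simps abs_divide flip: abs_mult_pos)
    with j have "\<bar>real j - real n\<bar> < (2 * eps n + 1) / p"
      by (simp add: add_divide_distrib abs_less_iff)
    also have "\<dots> \<le> real R" unfolding R_def by linarith
    finally show "j \<in> {j\<in>{n - R..n + R}. i \<le> j}" using \<open>i \<le> j\<close> by auto
  qed
  have "ay p a n = (\<Sum>i\<in>W. w p n i * a i)" unfolding ay_def W_def ..
  also have "\<dots> \<le> (\<Sum>i\<in>W. 2 * (\<Sum>j\<in>S i. f j i))"
    using term_le by (rule sum_mono)
  also have "\<dots> = 2 * (\<Sum>i\<in>W. \<Sum>j\<in>S i. f j i)"
    by (simp add: sum_distrib_left)
  also have "\<dots> \<le> 2 * (\<Sum>i\<in>W. \<Sum>j\<in>{j\<in>{n - R..n + R}. i \<le> j}. f j i)"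
    using S_sub f_nonneg by (intro mult_left_mono sum_mono sum_mono2) auto
  also have "(\<Sum>i\<in>W. \<Sum>j\<in>{j\<in>{n - R..n + R}. i \<le> j}. f j i)
      = (\<Sum>j\<in>{n - R..n + R}. \<Sum>i\<in>{i\<in>W. i \<le> j}. f j i)"
    using \<open>finite W\<close> by (intro sum.swap_restrict) auto
  also have "\<dots> \<le> (\<Sum>j\<in>{n - R..n + R}. \<Sum>i\<in>{0..j}. f j i)"
    using f_nonneg by (intro sum_mono sum_mono2) auto
  finally show ?thesis by (simp add: binom_trans_eq_sum_binom_weight f_def)
qed

lemma ay_nonneg: "0 \<le> p \<Longrightarrow> p \<le> 1 \<Longrightarrow> (\<And>n. a n \<ge> 0) \<Longrightarrow> 0 \<le> ay p a n"
  unfolding ay_def w_eq_sum_binom_weight by (intro sum_nonneg mult_nonneg_nonneg) (auto intro: binom_weight_nonneg)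

lemma ay_le_eps_bound:
  fixes p B :: real and a :: "nat \<Rightarrow> real"
  assumes p: "0 < p" "p < 1" and a: "\<And>n. a n \<ge> 0" and B: "\<And>j. binom_trans p a j \<le> B"
    and e: "eps n > 0" and large: "real n + 2 * eps n + 1 \<le> p * (eps n)\<^sup>2"
  shows "ay p a n \<le> (8 * B / p) * eps n + (4 * B / p + 6 * B)"
proof -
  define R where "R = nat \<lceil>(2 * eps n + 1) / p\<rceil>"
  have "0 \<le> B"
    using B[of 0] a[of 0] by (simp add: binom_trans_def)
  have "0 \<le> (2 * eps n + 1) / p" using e p by simp
  then have "real R \<le> (2 * eps n + 1) / p + 1" unfolding R_def by linarith
  then have R_le: "2 * real R + 1 \<le> 2 * ((2 * eps n + 1) / p + 1) + 1"
    by (intro add_right_mono mult_left_mono) auto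
  have "ay p a n \<le> 2 * (\<Sum>j\<in>{n - R..n + R}. binom_trans p a j)"
    using ay_le_sum_binom_trans[OF p a e large] unfolding R_def .
  also have "\<dots> \<le> 2 * (real (card {n - R..n + R}) * B)"
    using B by (intro mult_left_mono sum_bounded_above) auto
  also have "\<dots> \<le> 2 * ((2 * real R + 1) * B)"
    using \<open>0 \<le> B\<close> by (intro mult_left_mono mult_right_mono) auto
  also have "\<dots> \<le> 2 * ((2 * ((2 * eps n + 1) / p + 1) + 1) * B)"
    using \<open>0 \<le> B\<close> by (intro mult_left_mono mult_right_mono[OF R_le]) auto
  also have "\<dots> = (8 * B / p) * eps n + (4 * B / p + 6 * B)"
    using p by (simp add: field_simps)
  finally show ?thesis .
qed

lemma eventually_eps_large:
  assumes "0 < p"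
  shows "eventually (\<lambda>n. 0 < eps n \<and> real n + 2 * eps n + 1 \<le> p * (eps n)\<^sup>2) sequentially"
proof -
  have "eventually (\<lambda>n::nat. real n + 2 * (sqrt (real n) * ln (real n)) + 1
      \<le> p * (sqrt (real n) * ln (real n))\<^sup>2) sequentially"
    using assms by real_asymp
  with eventually_ge_at_top[of 2] show ?thesis
    by eventually_elim (simp add: eps_def)
qed

lemma eps_over_Suc_tendsto_zero: "(\<lambda>n. eps n / (real n + 1)) \<longlonglongrightarrow> 0"
proof -
  have "(\<lambda>n::nat. sqrt (real n) * ln (real n) / (real n + 1)) \<longlonglongrightarrow> 0"
    by real_asymp
  moreover have "eventually (\<lambda>n. sqrt (real n) * ln (real n) / (real n + 1) = eps n / (real n + 1)) sequentially"
    using eventually_ge_at_top[of 2] by eventually_elim (simp add: eps_def)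
  ultimately show ?thesis by (rule Lim_transform_eventually)
qed

theorem lemma8:
  fixes p :: real and a :: "nat \<Rightarrow> real" and L :: real
  assumes "0 < p" and "p < 1"
    and "\<And>n. a n \<ge> 0"
    and "(\<lambda>n. binom_trans p a n) \<longlonglongrightarrow> L"
  shows "(\<lambda>n. ay p a n / (real n + 1)) \<longlonglongrightarrow> 0"
proof -
  note p = assms(1,2) and a = assms(3)
  have "Bseq (\<lambda>n. binom_trans p a n)" using assms(4) by (intro convergent_imp_Bseq convergentI)
  then obtain K where "\<And>j. norm (binom_trans p a j) \<le> K" by (auto simp: Bseq_def)
  then have K: "\<And>j. binom_trans p a j \<le> K" by (simp add: abs_le_iff)
  define g where "g n = ((8 * K / p) * eps n + (4 * K / p + 6 * K)) / (real n + 1)" for n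
  have "g = (\<lambda>n. (8 * K / p) * (eps n / (real n + 1)) + (4 * K / p + 6 * K) * (1 / (real n + 1)))"
    by (simp add: g_def fun_eq_iff add_divide_distrib)
  also have "\<dots> \<longlonglongrightarrow> 0"
    by (intro tendsto_add_zero tendsto_mult_right_zero eps_over_Suc_tendsto_zero) real_asymp
  finally have "g \<longlonglongrightarrow> 0" .
  have upper: "eventually (\<lambda>n. ay p a n / (real n + 1) \<le> g n) sequentially"
    using eventually_eps_large[OF p(1)] unfolding g_def
    by eventually_elim (intro divide_right_mono ay_le_eps_bound[OF p a K], auto)
  have lower: "eventually (\<lambda>n. 0 \<le> ay p a n / (real n + 1)) sequentially"
    using p a by (simp add: ay_nonneg)
  show ?thesis
    by (rule tendsto_sandwich[OF lower upper tendsto_const \<open>g \<longlonglongrightarrow> 0\<close>])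
qed

end
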